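(* Assume $\mathrm{recc}(C)\subseteq\mathrm{recc}(P^B)$. Fix $k\in N_2$ and assume $N_0\not\subseteq J$. Let $(i,j)\in M'\times(N\setminus J)$ and $\gamma\in[0,\gamma'_{ij})$. Then $\bar r^i+\gamma\bar r^j\in\mathrm{recc}(S_k^C)$.
   Context: Let $A\in\mathbb{R}^{m\times n}$ have full row rank, $b\in\mathbb{R}^m$, and $P=\{x\in\mathbb{R}^n_+:Ax=b\}$. Let $C\subseteq\mathbb{R}^n$ be an open convex set. Fix a basis $B$ of $P$ with nonbasic set $N=\{1,\dots,n\}\setminus B$. Write $P=\{x:x_i=\bar b_i-\sum_{j\in N}\bar a_{ij}x_j\ (i\in B),\ x\ge0\}$ with $\bar b\ge0$. The basic solution $\bar x$ has $\bar x_i=\bar b_i$ ($i\in B$) and $0$ ($i\in N$). $P^B$ is obtained by dropping $x_i\ge0$ for $i\in B$. For $j\in N$, $\bar r^j$ has $\bar r^j_k=-\bar a_{kj}$ ($k\in B$), $\bar r^j_j=1$, and $0$ otherwise. Thus $P^B=\{\bar x+\sum_{j\in N}x_j\bar r^j:x_j\ge0\}$. It is assumed that $\bar x\notin\mathrm{cl}(C)$. For $j\in N$, $\alpha_j=\inf\{\lambda\ge0:\bar x+\lambda\bar r^j\in C\}$ and $\beta_j=\sup\{\lambda\ge0:\bar x+\lambda\bar r^j\in C\}$, with $\alpha_j=+\infty$, $\beta_j=-\infty$ if the halfline misses $C$. Define - $N_0=\{j:\alpha_j=+\infty,\beta_j=-\infty\}$; - $N_2=\{j:\alpha_j\in(0,\infty),\beta_j\in(\alpha_j,\infty)\}$.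 For a set $K$, $\mathrm{recc}(K)=\{d:x+\lambda d\in K\ \forall x\in K,\lambda\ge0\}$. For $k\in N_2$, $S_k^C=\{\bar x\}+\mathrm{conv}\big(\bigcup_{j\in N_2}\{\lambda\bar r^j:0\le\lambda<\beta_j\}\big)+\{\lambda\bar r^k:\lambda\le0\}+\mathrm{recc}(C)$. Let $J=\{i\in N:\bar r^i\in\mathrm{recc}(S_k^C)\}$. For $i\in J$, $j\in N\setminus J$, $\gamma'_{ij}=\sup\{\gamma\ge0:\bar r^i+\gamma\bar r^j\in\mathrm{recc}(S_k^C)\}$ (possibly $+\infty$). Let $M'=\{i\in J:\gamma'_{ij}>0\ \forall j\in N\setminus J\}$. *)

theory Defs
  imports "HOL-Analysis.Analysis"
begin

text \<open>Index set {1..n} is the finite type 'n, rows {1..m} the finite type 'm.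
  A :: real^'n^'m, b :: real^'m, P = {x >= 0. A x = b}.
  A basis B is a set of m column indices with linearly independent columns;
  N = - B is the nonbasic set.\<close>

definition full_row_rank :: "real^'n^'m \<Rightarrow> bool" where
  "full_row_rank A \<longleftrightarrow> rank A = CARD('m)"

definition xbar :: "real^'n^'m \<Rightarrow> real^'m \<Rightarrow> 'n set \<Rightarrow> real^'n" where
  "xbar A b B = (THE x. A *v x = b \<and> (\<forall>j. j \<notin> B \<longrightarrow> x $ j = 0))"

text \<open>Edge direction rbar^j (j in N): rbar^j_j = 1, rbar^j_l = 0 for other nonbasic l,
  and rbar^j_k = - abar_kj for basic k, i.e. the unique such vector with A rbar^j = 0.\<close>
definition rbar :: "real^'n^'m \<Rightarrow> 'n set \<Rightarrow> 'n \<Rightarrow> real^'n" where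
  "rbar A B j = (THE r. A *v r = 0 \<and> r $ j = 1 \<and> (\<forall>l. l \<notin> B \<and> l \<noteq> j \<longrightarrow> r $ l = 0))"

definition feasible_basis :: "real^'n^'m \<Rightarrow> real^'m \<Rightarrow> 'n set \<Rightarrow> bool" where
  "feasible_basis A b B \<longleftrightarrow>
     card B = CARD('m) \<and> inj_on (\<lambda>j. column j A) B \<and>
     independent ((\<lambda>j. column j A) ` B) \<and> (\<forall>i. 0 \<le> xbar A b B $ i)"

definition PB :: "real^'n^'m \<Rightarrow> real^'m \<Rightarrow> 'n set \<Rightarrow> (real^'n) set" where
  "PB A b B = {xbar A b B + (\<Sum>j\<in>-B. x j *\<^sub>R rbar A B j) | x. \<forall>j\<in>-B. 0 \<le> x j}"

definition recc :: "('a::real_vector) set \<Rightarrow> 'a set" where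
  "recc K = {d. \<forall>x\<in>K. \<forall>t::real. t \<ge> 0 \<longrightarrow> x + t *\<^sub>R d \<in> K}"

definition alpha :: "real^'n^'m \<Rightarrow> real^'m \<Rightarrow> 'n set \<Rightarrow> (real^'n) set \<Rightarrow> 'n \<Rightarrow> ereal" where
  "alpha A b B C j = Inf (ereal ` {t. t \<ge> 0 \<and> xbar A b B + t *\<^sub>R rbar A B j \<in> C})"

definition beta :: "real^'n^'m \<Rightarrow> real^'m \<Rightarrow> 'n set \<Rightarrow> (real^'n) set \<Rightarrow> 'n \<Rightarrow> ereal" where
  "beta A b B C j = Sup (ereal ` {t. t \<ge> 0 \<and> xbar A b B + t *\<^sub>R rbar A B j \<in> C})"

definition N0 :: "real^'n^'m \<Rightarrow> real^'m \<Rightarrow> 'n set \<Rightarrow> (real^'n) set \<Rightarrow> 'n set" where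
  "N0 A b B C = {j \<in> -B. alpha A b B C j = \<infinity> \<and> beta A b B C j = -\<infinity>}"

definition N2 :: "real^'n^'m \<Rightarrow> real^'m \<Rightarrow> 'n set \<Rightarrow> (real^'n) set \<Rightarrow> 'n set" where
  "N2 A b B C = {j \<in> -B. 0 < alpha A b B C j \<and> alpha A b B C j < \<infinity> \<and>
                          alpha A b B C j < beta A b B C j \<and> beta A b B C j < \<infinity>}"

definition SkC :: "real^'n^'m \<Rightarrow> real^'m \<Rightarrow> 'n set \<Rightarrow> (real^'n) set \<Rightarrow> 'n \<Rightarrow> (real^'n) set" where
  "SkC A b B C k =
     {xbar A b B + u + v + w | u v w.
        u \<in> convex hull (\<Union>j\<in>N2 A b B C. {t *\<^sub>R rbar A B j | t. 0 \<le> t \<and> ereal t < beta A b B C j}) \<and>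
        v \<in> {t *\<^sub>R rbar A B k | t. t \<le> 0} \<and>
        w \<in> recc C}"

definition Jset :: "real^'n^'m \<Rightarrow> real^'m \<Rightarrow> 'n set \<Rightarrow> (real^'n) set \<Rightarrow> 'n \<Rightarrow> 'n set" where
  "Jset A b B C k = {i \<in> -B. rbar A B i \<in> recc (SkC A b B C k)}"

definition gamma' :: "real^'n^'m \<Rightarrow> real^'m \<Rightarrow> 'n set \<Rightarrow> (real^'n) set \<Rightarrow> 'n \<Rightarrow> 'n \<Rightarrow> 'n \<Rightarrow> ereal" where
  "gamma' A b B C k i j =
     Sup (ereal ` {\<gamma>. \<gamma> \<ge> 0 \<and> rbar A B i + \<gamma> *\<^sub>R rbar A B j \<in> recc (SkC A b B C k)})"

definition M' :: "real^'n^'m \<Rightarrow> real^'m \<Rightarrow> 'n set \<Rightarrow> (real^'n) set \<Rightarrow> 'n \<Rightarrow> 'n set" where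
  "M' A b B C k = {i \<in> Jset A b B C k. \<forall>j \<in> -B - Jset A b B C k. gamma' A b B C k i j > 0}"

end

theory Submission
  imports Defs
begin

(* The recession cone of any set is a convex cone. Since i is in J, r^i is a recession
   direction of S_k^C, and gamma < gamma'_ij yields some g > gamma with r^i + g r^j a
   recession direction as well; r^i + gamma r^j is a conic combination of these two. *)

lemma recc_add:
  assumes "d \<in> recc K" and "e \<in> recc K"
  shows "d + e \<in> recc K"
  unfolding recc_def
proof (intro CollectI ballI allI impI)
  fix x and t :: real
  assume "x \<in> K" and "0 \<le> t"
  then have "x + t *\<^sub>R d \<in> K" using assms(1) by (simp add: recc_def)
  then have "(x + t *\<^sub>R d) + t *\<^sub>R e \<in> K" using assms(2) \<open>0 \<le> t\<close> by (simp add: recc_def)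
  then show "x + t *\<^sub>R (d + e) \<in> K" by (simp add: algebra_simps)
qed

lemma recc_scaleR:
  assumes "d \<in> recc K" and "0 \<le> c"
  shows "c *\<^sub>R d \<in> recc K"
  unfolding recc_def
proof (intro CollectI ballI allI impI)
  fix x and t :: real
  assume "x \<in> K" and "0 \<le> t"
  then have "x + (t * c) *\<^sub>R d \<in> K" using assms by (simp add: recc_def)
  then show "x + t *\<^sub>R c *\<^sub>R d \<in> K" by simp
qed

lemma recc_add_scaled_le:
  assumes d: "d \<in> recc K" and g: "d + g *\<^sub>R e \<in> recc K"
    and "0 \<le> \<gamma>" and "\<gamma> \<le> g"
  shows "d + \<gamma> *\<^sub>R e \<in> recc K"
proof (cases "g = 0")
  case True
  then show ?thesis using d \<open>0 \<le> \<gamma>\<close> \<open>\<gamma> \<le> g\<close> by simp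
next
  case False
  then have "0 < g" using \<open>0 \<le> \<gamma>\<close> \<open>\<gamma> \<le> g\<close> by linarith
  then have conic: "d + \<gamma> *\<^sub>R e = (1 - \<gamma> / g) *\<^sub>R d + (\<gamma> / g) *\<^sub>R (d + g *\<^sub>R e)"
    by (simp add: algebra_simps)
  have "0 \<le> 1 - \<gamma> / g" and "0 \<le> \<gamma> / g"
    using \<open>0 < g\<close> \<open>0 \<le> \<gamma>\<close> \<open>\<gamma> \<le> g\<close> by simp_all
  then show ?thesis
    unfolding conic by (intro recc_add recc_scaleR d g)
qed

theorem proposition8:
  fixes A :: "real^'n^'m" and b :: "real^'m" and B :: "'n set"
    and C :: "(real^'n) set" and k i j :: 'n and \<gamma> :: real
  assumes "full_row_rank A"
    and "feasible_basis A b B"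
    and "open C" and "convex C"
    and "xbar A b B \<notin> closure C"
    and "recc C \<subseteq> recc (PB A b B)"
    and "k \<in> N2 A b B C"
    and "\<not> N0 A b B C \<subseteq> Jset A b B C k"
    and "i \<in> M' A b B C k"
    and "j \<in> -B - Jset A b B C k"
    and "0 \<le> \<gamma>" and "ereal \<gamma> < gamma' A b B C k i j"
  shows "rbar A B i + \<gamma> *\<^sub>R rbar A B j \<in> recc (SkC A b B C k)"
proof -
  have ri: "rbar A B i \<in> recc (SkC A b B C k)"
    using \<open>i \<in> M' A b B C k\<close> unfolding M'_def Jset_def by blast
  obtain g where g: "rbar A B i + g *\<^sub>R rbar A B j \<in> recc (SkC A b B C k)" and "\<gamma> < g"
    using \<open>ereal \<gamma> < gamma' A b B C k i j\<close> unfolding gamma'_def less_Sup_iff by auto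
  show ?thesis
    using recc_add_scaled_le[OF ri g \<open>0 \<le> \<gamma>\<close>] \<open>\<gamma> < g\<close> by simp
qed

end
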